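(* Suppose $(\varepsilon,\beta,\gamma;(12))\in\mathrm{Par}(n)$. Let $b$ and $c$ be the orders of $\beta$ and $\gamma$ as elements of $\mathcal S_n$. Then $c\mid 2b$, and if $c$ is odd then $c=b$.
   Context: A Latin square of order $n$ is an $n\times n$ array with rows, columns and symbols indexed by $[n]$, each symbol occurring once in each row and each column, with triple set $O(L)=\{(i,j,L(i,j))\}$. Permutations act on the right; $\varepsilon$ is the identity. A paratopism $(\alpha,\beta,\gamma;(12))$ with $\alpha,\beta,\gamma\in\mathcal S_n$ maps $L$ to $L^\sigma$ with triple set $\{(y\beta,x\alpha,z\gamma):(x,y,z)\in O(L)\}$; it is an autoparatopism of $L$ if $L^\sigma=L$. $\mathrm{Par}(n)$ denotes the set of paratopisms that are autoparatopisms of at least one Latin square of order $n$. *)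

theory Defs
  imports "HOL-Combinatorics.Permutations"
begin

text \<open>Rows, columns and symbols are indexed by {..<n} (i.e. [n] shifted to start at 0).\<close>

definition latin_square :: "nat \<Rightarrow> (nat \<Rightarrow> nat \<Rightarrow> nat) \<Rightarrow> bool" where
  "latin_square n L \<longleftrightarrow>
     (\<forall>i<n. \<forall>j<n. L i j < n) \<and>
     (\<forall>i<n. inj_on (L i) {..<n}) \<and>
     (\<forall>j<n. inj_on (\<lambda>i. L i j) {..<n})"

definition triples :: "nat \<Rightarrow> (nat \<Rightarrow> nat \<Rightarrow> nat) \<Rightarrow> (nat \<times> nat \<times> nat) set" where
  "triples n L = {(i, j, L i j) | i j. i < n \<and> j < n}"

definition is_autoparatopism_12 ::
  "nat \<Rightarrow> (nat \<Rightarrow> nat) \<Rightarrow> (nat \<Rightarrow> nat) \<Rightarrow> (nat \<Rightarrow> nat) \<Rightarrow> (nat \<Rightarrow> nat \<Rightarrow> nat) \<Rightarrow> bool" where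
  "is_autoparatopism_12 n \<alpha> \<beta> \<gamma> L \<longleftrightarrow>
     (\<lambda>(x, y, z). (\<beta> y, \<alpha> x, \<gamma> z)) ` triples n L = triples n L"

definition in_Par_12 :: "nat \<Rightarrow> (nat \<Rightarrow> nat) \<Rightarrow> (nat \<Rightarrow> nat) \<Rightarrow> (nat \<Rightarrow> nat) \<Rightarrow> bool" where
  "in_Par_12 n \<alpha> \<beta> \<gamma> \<longleftrightarrow>
     \<alpha> permutes {..<n} \<and> \<beta> permutes {..<n} \<and> \<gamma> permutes {..<n} \<and>
     (\<exists>L. latin_square n L \<and> is_autoparatopism_12 n \<alpha> \<beta> \<gamma> L)"

definition perm_order :: "(nat \<Rightarrow> nat) \<Rightarrow> nat" where
  "perm_order f = (LEAST k. 0 < k \<and> f ^^ k = id)"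

end

theory Submission
  imports Defs "HOL-Combinatorics.Cycles"
begin

text \<open>With first component the identity, the autoparatopism condition reads
  \<open>L (\<beta> y) x = \<gamma> (L x y)\<close>. Applying it twice gives \<open>L (\<beta> x) (\<beta> y) = \<gamma> (\<gamma> (L x y))\<close>, so
  \<open>\<beta>^b = id\<close> makes \<open>\<gamma>^(2b)\<close> fix every symbol and \<open>c dvd 2b\<close>. If \<open>c = 2k + 1\<close>, then
  \<open>L (\<beta>^(k+1) y) (\<beta>^k x) = \<gamma>^c (L x y) = L x y\<close>; taking \<open>y = \<beta>^k x\<close>, injectivity of column
  \<open>\<beta>^k x\<close> yields \<open>\<beta>^c x = x\<close>. Hence \<open>b dvd c\<close>, and \<open>c dvd b\<close> as \<open>c\<close> is coprime to 2.\<close>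

lemma perm_order_pos:
  assumes "permutation f"
  shows "0 < perm_order f"
  and funpow_perm_order: "f ^^ perm_order f = id"
proof -
  obtain k where "f ^^ k = id" "0 < k"
    using assms by (rule permutation_is_nilpotent)
  then have "\<exists>k. 0 < k \<and> f ^^ k = id" by blast
  from LeastI_ex[OF this] show "0 < perm_order f" "f ^^ perm_order f = id"
    unfolding perm_order_def by auto
qed

lemma funpow_eq_id_iff_perm_order_dvd:
  assumes "permutation f"
  shows "f ^^ m = id \<longleftrightarrow> perm_order f dvd m"
proof
  assume id: "f ^^ m = id"
  have "f ^^ (m mod perm_order f) = id"
  proof
    fix x
    show "(f ^^ (m mod perm_order f)) x = id x"
      using funpow_mod_eq[where f=f and n="perm_order f" and x=x and m=m]
        funpow_perm_order[OF assms] id by simp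
  qed
  moreover have "m mod perm_order f < perm_order f"
    using perm_order_pos[OF assms] by simp
  ultimately have "m mod perm_order f = 0"
    using not_less_Least[of "m mod perm_order f" "\<lambda>k. 0 < k \<and> f ^^ k = id"]
    unfolding perm_order_def by (meson not_gr0)
  then show "perm_order f dvd m"
    by (rule mod_0_imp_dvd)
next
  assume "perm_order f dvd m"
  then obtain q where "m = perm_order f * q" ..
  then show "f ^^ m = id"
    by (simp add: funpow_mult[symmetric] funpow_perm_order[OF assms])
qed

lemma funpow_eq_id_if_fixes:
  assumes "f permutes S" and "\<And>x. x \<in> S \<Longrightarrow> (f ^^ m) x = x"
  shows "f ^^ m = id"
proof
  fix x
  show "(f ^^ m) x = id x"
    using assms permutes_not_in[OF permutes_funpow[OF assms(1)], of x m] by (cases "x \<in> S") auto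
qed

lemma latin_square_row_surj:
  assumes "latin_square n L" "i < n" "z < n"
  obtains j where "j < n" "L i j = z"
proof -
  have "L i ` {..<n} = {..<n}"
    using assms unfolding latin_square_def by (intro endo_inj_surj) auto
  with assms(3) that show thesis by (metis imageE lessThan_iff)
qed

lemma autoparatopism_12_apply:
  assumes "is_autoparatopism_12 n \<alpha> \<beta> \<gamma> L" "x < n" "y < n"
  shows "L (\<beta> y) (\<alpha> x) = \<gamma> (L x y)"
proof -
  have "(x, y, L x y) \<in> triples n L"
    unfolding triples_def using assms(2,3) by blast
  then have "(\<beta> y, \<alpha> x, \<gamma> (L x y)) \<in> triples n L"
    using assms(1) unfolding is_autoparatopism_12_def by force
  then show ?thesis unfolding triples_def by auto
qed

locale autoparatopism_12_id =
  fixes n :: nat and \<beta> \<gamma> :: "nat \<Rightarrow> nat" and L :: "nat \<Rightarrow> nat \<Rightarrow> nat"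
  assumes latin: "latin_square n L"
    and \<beta>_permutes: "\<beta> permutes {..<n}"
    and \<gamma>_permutes: "\<gamma> permutes {..<n}"
    and autoparatopism: "is_autoparatopism_12 n id \<beta> \<gamma> L"
begin

lemma funpow_\<beta>_less: "x < n \<Longrightarrow> (\<beta> ^^ k) x < n"
  using permutes_in_funpow_image[OF \<beta>_permutes, of x k] by simp

lemma swap_apply: "x < n \<Longrightarrow> y < n \<Longrightarrow> L (\<beta> y) x = \<gamma> (L x y)"
  using autoparatopism_12_apply[OF autoparatopism] by simp

lemma funpow_\<beta>_apply_both:
  assumes "x < n" "y < n"
  shows "L ((\<beta> ^^ k) x) ((\<beta> ^^ k) y) = (\<gamma> ^^ (2 * k)) (L x y)"
proof (induction k)
  case 0
  show ?case by simp
next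
  case (Suc k)
  let ?x = "(\<beta> ^^ k) x" and ?y = "(\<beta> ^^ k) y"
  have "?x < n" "?y < n" "\<beta> ?y < n"
    using assms funpow_\<beta>_less[of _ k] funpow_\<beta>_less[of _ "Suc k"] by auto
  then have "L (\<beta> ?x) (\<beta> ?y) = \<gamma> (\<gamma> (L ?x ?y))"
    using swap_apply by metis
  with Suc show ?case by simp
qed

lemma funpow_\<beta>_apply_odd:
  assumes "x < n" "y < n"
  shows "L ((\<beta> ^^ Suc k) y) ((\<beta> ^^ k) x) = (\<gamma> ^^ Suc (2 * k)) (L x y)"
  using swap_apply[OF funpow_\<beta>_less funpow_\<beta>_less] funpow_\<beta>_apply_both assms by simp

lemma funpow_\<gamma>_double_eq_id:
  assumes "\<beta> ^^ k = id"
  shows "\<gamma> ^^ (2 * k) = id"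
proof (rule funpow_eq_id_if_fixes[OF \<gamma>_permutes])
  fix z
  assume "z \<in> {..<n}"
  then have "z < n" by simp
  then obtain j where "j < n" "L 0 j = z"
    using latin_square_row_surj[OF latin, of 0] by (metis gr_zeroI not_less_zero)
  then show "(\<gamma> ^^ (2 * k)) z = z"
    using funpow_\<beta>_apply_both[of 0 j k] assms \<open>z < n\<close> by simp
qed

lemma funpow_\<beta>_odd_eq_id:
  assumes "\<gamma> ^^ Suc (2 * k) = id"
  shows "\<beta> ^^ Suc (2 * k) = id"
proof (rule funpow_eq_id_if_fixes[OF \<beta>_permutes])
  fix x
  assume "x \<in> {..<n}"
  then have x: "x < n" by simp
  let ?y = "(\<beta> ^^ k) x"
  have y: "?y < n" using funpow_\<beta>_less[OF x] .
  have "(\<beta> ^^ Suc k) ?y = (\<beta> ^^ Suc (2 * k)) x"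
    by (simp add: mult_2 funpow_add)
  moreover have "(\<gamma> ^^ Suc (2 * k)) (L x ?y) = L x ?y"
    using assms by simp
  ultimately have "L ((\<beta> ^^ Suc (2 * k)) x) ?y = L x ?y"
    using funpow_\<beta>_apply_odd[OF x y, of k] by simp
  moreover have "inj_on (\<lambda>i. L i ?y) {..<n}"
    using latin y unfolding latin_square_def by blast
  ultimately show "(\<beta> ^^ Suc (2 * k)) x = x"
    using funpow_\<beta>_less[OF x] x by (metis inj_onD lessThan_iff)
qed

lemma perm_order_\<gamma>_dvd: "perm_order \<gamma> dvd 2 * perm_order \<beta>"
  using funpow_\<gamma>_double_eq_id[OF funpow_perm_order] \<beta>_permutes \<gamma>_permutes
    funpow_eq_id_iff_perm_order_dvd permutation_permutes by blast

lemma perm_order_\<gamma>_eq_if_odd: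
  assumes "odd (perm_order \<gamma>)"
  shows "perm_order \<gamma> = perm_order \<beta>"
proof (rule dvd_antisym)
  have \<beta>: "permutation \<beta>" and \<gamma>: "permutation \<gamma>"
    using \<beta>_permutes \<gamma>_permutes permutation_permutes by blast+
  from assms obtain k where "perm_order \<gamma> = Suc (2 * k)"
    by (metis oddE Suc_eq_plus1)
  then have "\<beta> ^^ perm_order \<gamma> = id"
    using funpow_\<beta>_odd_eq_id funpow_perm_order[OF \<gamma>] by simp
  then show "perm_order \<beta> dvd perm_order \<gamma>"
    using funpow_eq_id_iff_perm_order_dvd[OF \<beta>] by simp
  show "perm_order \<gamma> dvd perm_order \<beta>"
    using perm_order_\<gamma>_dvd assms coprime_dvd_mult_right_iff[of "perm_order \<gamma>" 2]
    by (simp add: coprime_commute)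
qed

end

theorem theorem4p1:
  fixes n :: nat and \<beta> \<gamma> :: "nat \<Rightarrow> nat"
  assumes "in_Par_12 n id \<beta> \<gamma>"
  shows "perm_order \<gamma> dvd 2 * perm_order \<beta> \<and>
         (odd (perm_order \<gamma>) \<longrightarrow> perm_order \<gamma> = perm_order \<beta>)"
proof -
  from assms obtain L where "autoparatopism_12_id n \<beta> \<gamma> L"
    unfolding in_Par_12_def autoparatopism_12_id_def by blast
  then interpret autoparatopism_12_id n \<beta> \<gamma> L .
  show ?thesis using perm_order_\<gamma>_dvd perm_order_\<gamma>_eq_if_odd by blast
qed

end
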